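(* Let $V$ be a nonzero finite-dimensional symplectic vector space over $\mathbf{C}$ and $n\ge2$. The space of polydifferential operators $\psi:\mathcal{O}(V)^{\otimes(n-1)}\to\mathcal{O}(V)$ which are symmetric (invariant under permuting the $n-1$ tensor factors) and invariant under Hamiltonian flow (i.e. $\xi_h(\psi(f_1\otimes\cdots\otimes f_{n-1}))=\sum_{j}\psi(f_1\otimes\cdots\otimes\xi_h(f_j)\otimes\cdots\otimes f_{n-1})$ for all $h,f_j\in\mathcal{O}(V)$) is one-dimensional, spanned by the multiplication map $f_1\otimes\cdots\otimes f_{n-1}\mapsto f_1\cdots f_{n-1}$. The same holds with $\mathcal{O}(V)$ replaced by its completion $\widehat{\mathcal{O}(V)}$ at the augmentation ideal.
   Context: $\xi_h=\{h,-\}$ is the Hamiltonian vector field for the Poisson bracket induced by the symplectic form. A polydifferential operator is a finite sum of maps $f_1\otimes\cdots\otimes f_{n-1}\mapsto D_1(f_1)\cdots D_{n-1}(f_{n-1})$ with $D_j$ differential operators with polynomial (resp. formal power series) coefficients. *)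

theory Defs
  imports Complex_Main "HOL-Library.Function_Algebras"
begin

text \<open>Coordinates: a basis of V indexed by the finite type 'v.  Monomials are
  exponent vectors 'v => nat; a formal power series (element of the completion of O(V))
  is an arbitrary coefficient function; a polynomial (element of O(V)) is one with
  finite support.  Addition is pointwise (Function_Algebras); the ring product is
  the Cauchy product cmul (NOT the pointwise times of Function_Algebras).\<close>

type_synonym 'v ser = "('v \<Rightarrow> nat) \<Rightarrow> complex"

definition is_poly :: "'v ser \<Rightarrow> bool" where
  "is_poly f \<longleftrightarrow> finite {\<alpha>. f \<alpha> \<noteq> 0}"

definition cmul :: "('v::finite) ser \<Rightarrow> 'v ser \<Rightarrow> 'v ser" where
  "cmul f g = (\<lambda>\<alpha>. \<Sum>\<beta>\<in>{\<beta>. \<beta> \<le> \<alpha>}. f \<beta> * g (\<lambda>v. \<alpha> v - \<beta> v))"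

definition sone :: "'v ser" where
  "sone = (\<lambda>\<alpha>. if \<alpha> = (\<lambda>_. 0) then 1 else 0)"

definition cscale :: "complex \<Rightarrow> 'v ser \<Rightarrow> 'v ser" where
  "cscale c f = (\<lambda>\<alpha>. c * f \<alpha>)"

fun mprod :: "nat \<Rightarrow> (nat \<Rightarrow> ('v::finite) ser) \<Rightarrow> 'v ser" where
  "mprod 0 F = sone"
| "mprod (Suc k) F = cmul (mprod k F) (F k)"

definition pdiff :: "'v \<Rightarrow> 'v ser \<Rightarrow> 'v ser" where
  "pdiff a f = (\<lambda>\<alpha>. of_nat (\<alpha> a + 1) * f (\<alpha>(a := \<alpha> a + 1)))"

definition pdiffs :: "('v::finite \<Rightarrow> nat) \<Rightarrow> 'v ser \<Rightarrow> 'v ser" where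
  "pdiffs \<gamma> f = (\<lambda>\<alpha>. (\<Prod>a\<in>UNIV. of_nat (fact (\<alpha> a + \<gamma> a)) / of_nat (fact (\<alpha> a)))
                      * f (\<lambda>v. \<alpha> v + \<gamma> v))"

definition diffop :: "('v::finite) ser set \<Rightarrow> ('v ser \<Rightarrow> 'v ser) \<Rightarrow> bool" where
  "diffop R D \<longleftrightarrow> (\<exists>S c. finite S \<and> (\<forall>\<gamma>\<in>S. c \<gamma> \<in> R) \<and>
       (\<forall>f. D f = (\<Sum>\<gamma>\<in>S. cmul (c \<gamma>) (pdiffs \<gamma> f))))"

definition polydiff :: "('v::finite) ser set \<Rightarrow> nat \<Rightarrow> ((nat \<Rightarrow> 'v ser) \<Rightarrow> 'v ser) \<Rightarrow> bool" where
  "polydiff R k \<psi> \<longleftrightarrow> (\<exists>(N::nat) Ds. (\<forall>i j. diffop R (Ds i j)) \<and>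
       (\<forall>fs. (\<forall>j<k. fs j \<in> R) \<longrightarrow> \<psi> fs = (\<Sum>i<N. mprod k (\<lambda>j. Ds i j (fs j)))))"

text \<open>Hamiltonian vector field xi_h = {h,-}, with Poisson bracket
  {f,g} = sum_{a,b} \<pi> a b (d_a f)(d_b g), \<pi> the Poisson bivector (inverse of \<omega>).\<close>
definition ham :: "('v::finite \<Rightarrow> 'v \<Rightarrow> complex) \<Rightarrow> 'v ser \<Rightarrow> 'v ser \<Rightarrow> 'v ser" where
  "ham \<pi> h f = (\<Sum>a\<in>UNIV. \<Sum>b\<in>UNIV. cscale (\<pi> a b) (cmul (pdiff a h) (pdiff b f)))"

definition symmetric_op :: "'v ser set \<Rightarrow> nat \<Rightarrow> ((nat \<Rightarrow> 'v ser) \<Rightarrow> 'v ser) \<Rightarrow> bool" where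
  "symmetric_op R k \<psi> \<longleftrightarrow> (\<forall>\<sigma> fs. bij_betw \<sigma> {..<k} {..<k} \<longrightarrow> (\<forall>j<k. fs j \<in> R) \<longrightarrow>
       \<psi> (fs \<circ> \<sigma>) = \<psi> fs)"

definition ham_invariant :: "('v::finite \<Rightarrow> 'v \<Rightarrow> complex) \<Rightarrow> 'v ser set \<Rightarrow> nat \<Rightarrow>
    ((nat \<Rightarrow> 'v ser) \<Rightarrow> 'v ser) \<Rightarrow> bool" where
  "ham_invariant \<pi> R k \<psi> \<longleftrightarrow> (\<forall>h fs. h \<in> R \<longrightarrow> (\<forall>j<k. fs j \<in> R) \<longrightarrow>
       ham \<pi> h (\<psi> fs) = (\<Sum>j<k. \<psi> (fs(j := ham \<pi> h (fs j)))))"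

end

theory Submission
  imports Defs "HOL-Library.FuncSet" "HOL-Combinatorics.Transposition"
begin

text \<open>
  Write \<open>\<psi>\<^sub>0(f\<^sub>1,\<dots>,f\<^sub>k)\<close> for the constant term of \<open>\<psi>(f\<^sub>1,\<dots>,f\<^sub>k)\<close>.
  Since \<open>\<partial>\<^sub>b = {\<omega>(b,-), -}\<close> is Hamiltonian, invariance makes \<open>\<psi>\<close> commute with every
  \<open>\<partial>\<^sub>b\<close> in the Leibniz sense, so by induction on the degree all coefficients of
  \<open>\<psi>(f\<^sub>1,\<dots>,f\<^sub>k)\<close> are determined by \<open>\<psi>\<^sub>0\<close>, just as for the product \<open>f\<^sub>1\<cdots>f\<^sub>k\<close>.
  It remains to show \<open>\<psi>\<^sub>0(f\<^sub>1,\<dots>,f\<^sub>k) = c f\<^sub>1(0)\<cdots>f\<^sub>k(0)\<close>. Splitting each \<open>f\<^sub>j\<close> into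
  \<open>f\<^sub>j(0)\<close> and \<open>f\<^sub>j - f\<^sub>j(0)\<close>, multilinearity reduces this to: \<open>\<psi>\<^sub>0\<close> vanishes when all
  arguments are \<open>1\<close> or vanish at \<open>0\<close> and some argument \<open>g\<close> vanishes at \<open>0\<close>.
  For this choose a linear \<open>z\<close> and an \<open>H\<close> without linear part with \<open>{H, z} = g\<close>, and
  put \<open>z\<close> in place of \<open>g\<close>. As \<open>H\<close> has no linear part, \<open>{H, F}(0) = 0\<close> for every \<open>F\<close>,
  so invariance gives \<open>0 = \<Sum>\<^sub>j \<psi>\<^sub>0(\<dots>, {H, f\<^sub>j}, \<dots>)\<close>. By symmetry every summand at a copy
  of \<open>z\<close> equals \<open>\<psi>\<^sub>0(f\<^sub>1,\<dots>,f\<^sub>k)\<close>, the summands at \<open>1\<close> vanish, and the others have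
  fewer arguments different from \<open>z\<close>, so they vanish by induction. Hence
  \<open>\<psi>\<^sub>0(f\<^sub>1,\<dots>,f\<^sub>k)\<close> times the positive number of copies of \<open>z\<close> is \<open>0\<close>.
\<close>

section \<open>The ring of formal power series\<close>

lemma sum_apply: "(\<Sum>a\<in>A. F a) x = (\<Sum>a\<in>A. F a x)"
  by (induction A rule: infinite_finite_induct) auto

lemma finite_pointwise_le: "finite {\<beta>::'v::finite \<Rightarrow> nat. \<beta> \<le> \<alpha>}"
proof -
  have "{\<beta>::'v \<Rightarrow> nat. \<beta> \<le> \<alpha>} = PiE UNIV (\<lambda>v. {..\<alpha> v})"
    by (auto simp: le_fun_def PiE_def Pi_def extensional_def)
  thus ?thesis by (simp add: finite_PiE)
qed

definition antidiag :: "('v \<Rightarrow> nat) \<Rightarrow> (('v \<Rightarrow> nat) \<times> ('v \<Rightarrow> nat)) set" where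
  "antidiag \<alpha> = {p. fst p + snd p = \<alpha>}"

lemma finite_antidiag: "finite (antidiag (\<alpha>::'v::finite \<Rightarrow> nat))"
proof -
  have "antidiag \<alpha> \<subseteq> {\<beta>. \<beta> \<le> \<alpha>} \<times> {\<beta>. \<beta> \<le> \<alpha>}"
    by (auto simp: antidiag_def le_fun_def)
  thus ?thesis by (rule finite_subset) (simp add: finite_pointwise_le)
qed

lemma cmul_antidiag: "cmul f g \<alpha> = (\<Sum>p\<in>antidiag \<alpha>. f (fst p) * g (snd p))"
  unfolding cmul_def
  by (rule sum.reindex_bij_witness[where i = fst and j = "\<lambda>\<beta>. (\<beta>, \<lambda>v. \<alpha> v - \<beta> v)"])
     (auto simp: antidiag_def le_fun_def fun_eq_iff, metis add_diff_cancel_left', metis le_add1)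

lemma cmul_comm: "cmul f g = cmul g f"
proof
  fix \<alpha>
  show "cmul f g \<alpha> = cmul g f \<alpha>"
    unfolding cmul_antidiag
    by (rule sum.reindex_bij_witness[where i = prod.swap and j = prod.swap])
       (auto simp: antidiag_def add.commute)
qed

lemma cmul_sone: "cmul sone f = f"
proof
  fix \<alpha>
  have "cmul sone f \<alpha> = (\<Sum>p\<in>antidiag \<alpha>. if p = (0, \<alpha>) then f \<alpha> else 0)"
    unfolding cmul_antidiag by (rule sum.cong) (auto simp: sone_def antidiag_def zero_fun_def)
  also have "\<dots> = f \<alpha>"
    using finite_antidiag[of \<alpha>] by (simp add: antidiag_def)
  finally show "cmul sone f \<alpha> = f \<alpha>" .
qed

lemma cmul_assoc: "cmul (cmul f g) h = cmul f (cmul g h)"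
proof
  fix \<alpha> :: "'a::finite \<Rightarrow> nat"
  define T where "T = {t :: ('a \<Rightarrow> nat) \<times> ('a \<Rightarrow> nat) \<times> ('a \<Rightarrow> nat).
                       fst t + fst (snd t) + snd (snd t) = \<alpha>}"
  have "cmul (cmul f g) h \<alpha>
      = (\<Sum>pq\<in>Sigma (antidiag \<alpha>) (\<lambda>p. antidiag (fst p)).
           f (fst (snd pq)) * g (snd (snd pq)) * h (snd (fst pq)))"
    unfolding cmul_antidiag sum_distrib_right
    by (subst sum.Sigma) (auto simp: finite_antidiag split_def)
  also have "\<dots> = (\<Sum>t\<in>T. f (fst t) * g (fst (snd t)) * h (snd (snd t)))"
    by (rule sum.reindex_bij_witness
          [where i = "\<lambda>t. ((fst t + fst (snd t), snd (snd t)), (fst t, fst (snd t)))"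
             and j = "\<lambda>pq. (fst (snd pq), snd (snd pq), snd (fst pq))"])
       (auto simp: T_def antidiag_def)
  also have "\<dots> = (\<Sum>pq\<in>Sigma (antidiag \<alpha>) (\<lambda>p. antidiag (snd p)).
                    f (fst (fst pq)) * g (fst (snd pq)) * h (snd (snd pq)))"
    by (rule sum.reindex_bij_witness
          [where i = "\<lambda>pq. (fst (fst pq), fst (snd pq), snd (snd pq))"
             and j = "\<lambda>t. ((fst t, fst (snd t) + snd (snd t)), (fst (snd t), snd (snd t)))"])
       (auto simp: T_def antidiag_def add.assoc)
  also have "\<dots> = cmul f (cmul g h) \<alpha>"
    unfolding cmul_antidiag sum_distrib_left
    by (subst sum.Sigma) (auto simp: finite_antidiag split_def mult.assoc)
  finally show "cmul (cmul f g) h \<alpha> = cmul f (cmul g h) \<alpha>" .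
qed

interpretation cprod: comm_monoid_set "cmul :: ('v::finite) ser \<Rightarrow> _ \<Rightarrow> _" sone
  by unfold_locales (rule cmul_assoc, rule cmul_comm, simp add: cmul_comm[of _ sone] cmul_sone)

lemma cmul_zero_right [simp]: "cmul f 0 = 0"
  by (simp add: cmul_def fun_eq_iff)

lemma cmul_add_left: "cmul (f + g) h = cmul f h + cmul g h"
  by (auto simp: cmul_def fun_eq_iff distrib_right sum.distrib)

lemma cmul_add_right: "cmul h (f + g) = cmul h f + cmul h g"
  by (auto simp: cmul_def fun_eq_iff distrib_left sum.distrib)

lemma cmul_sum_left: "cmul (\<Sum>i\<in>I. G i) h = (\<Sum>i\<in>I. cmul (G i) h)"
  unfolding fun_eq_iff cmul_def sum_apply sum_distrib_right by (intro allI sum.swap)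

lemma cmul_sum_right: "cmul h (\<Sum>i\<in>I. G i) = (\<Sum>i\<in>I. cmul h (G i))"
  unfolding fun_eq_iff cmul_def sum_apply sum_distrib_left by (intro allI sum.swap)

lemma cmul_cscale_left: "cmul (cscale c f) g = cscale c (cmul f g)"
  by (auto simp: cmul_def cscale_def fun_eq_iff sum_distrib_left mult.assoc)

lemma cmul_cscale_right: "cmul g (cscale c f) = cscale c (cmul g f)"
  by (auto simp: cmul_def cscale_def fun_eq_iff sum_distrib_left mult.left_commute)

lemma cmul_at_zero: "cmul f g 0 = f 0 * g 0"
proof -
  have "{\<beta>::'a \<Rightarrow> nat. \<beta> \<le> 0} = {0}" by (auto simp: le_fun_def fun_eq_iff)
  thus ?thesis by (simp add: cmul_def zero_fun_def)
qed

lemma cscale_add: "cscale c (f + g) = cscale c f + cscale c g"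
  by (auto simp: cscale_def fun_eq_iff distrib_left)

lemma cscale_cscale: "cscale a (cscale b f) = cscale (a * b) f"
  by (simp add: cscale_def mult.assoc)

lemma cscale_zero [simp]: "cscale c 0 = 0"
  by (simp add: cscale_def fun_eq_iff)

lemma cscale_sum: "cscale c (\<Sum>i\<in>I. G i) = (\<Sum>i\<in>I. cscale c (G i))"
  unfolding fun_eq_iff cscale_def sum_apply sum_distrib_left by simp

lemma sone_at_zero [simp]: "sone 0 = 1"
  by (simp add: sone_def zero_fun_def)

lemma mprod_eq_cprod: "mprod k F = cprod.F F {..<k}"
  by (induction k) (auto simp: lessThan_Suc cprod.insert cmul_comm)

lemma mprod_cong: "(\<And>j. j < k \<Longrightarrow> F j = G j) \<Longrightarrow> mprod k F = mprod k G"
  unfolding mprod_eq_cprod by (rule cprod.cong) auto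

lemma mprod_permute: "bij_betw \<sigma> {..<k} {..<k} \<Longrightarrow> mprod k (F \<circ> \<sigma>) = mprod k F"
  unfolding mprod_eq_cprod comp_def by (rule cprod.reindex_bij_betw)

lemma mprod_upd: "j < k \<Longrightarrow> mprod k (F(j := f)) = cmul f (cprod.F F ({..<k} - {j}))"
  unfolding mprod_eq_cprod by (subst cprod.remove[of _ j]) (auto intro!: cprod.cong)

lemma mprod_upd_add: "j < k \<Longrightarrow> mprod k (F(j := f + g)) = mprod k (F(j := f)) + mprod k (F(j := g))"
  by (simp add: mprod_upd cmul_add_left)

lemma mprod_upd_cscale: "j < k \<Longrightarrow> mprod k (F(j := cscale a f)) = cscale a (mprod k (F(j := f)))"
  by (simp add: mprod_upd cmul_cscale_left)

lemma mprod_at_zero: "mprod k F 0 = (\<Prod>j<k. F j 0)"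
  by (induction k) (simp_all add: cmul_at_zero flip: zero_fun_def)

section \<open>Derivations\<close>

definition unit_exp :: "'v \<Rightarrow> 'v \<Rightarrow> nat" where
  "unit_exp b = (\<lambda>v. if v = b then 1 else 0)"

lemma pdiff_shift: "pdiff b f \<alpha> = of_nat (\<alpha> b + 1) * f (\<alpha> + unit_exp b)"
proof -
  have "\<alpha>(b := \<alpha> b + 1) = \<alpha> + unit_exp b" by (auto simp: unit_exp_def fun_eq_iff)
  thus ?thesis by (simp add: pdiff_def)
qed

lemma pdiff_cscale: "pdiff a (cscale c f) = cscale c (pdiff a f)"
  by (auto simp: pdiff_def cscale_def fun_eq_iff)

lemma pdiff_sone [simp]: "pdiff a sone = 0"
  by (auto simp: pdiff_def sone_def fun_eq_iff)

lemma sum_antidiag_shift: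
  fixes F :: "('v::finite \<Rightarrow> nat) \<times> ('v \<Rightarrow> nat) \<Rightarrow> complex"
  shows "(\<Sum>p\<in>antidiag \<alpha>. of_nat (fst p b + 1) * F (fst p + unit_exp b, snd p))
       = (\<Sum>q\<in>antidiag (\<alpha> + unit_exp b). of_nat (fst q b) * F q)"
proof -
  have "(\<Sum>p\<in>antidiag \<alpha>. of_nat (fst p b + 1) * F (fst p + unit_exp b, snd p))
      = (\<Sum>q\<in>{q\<in>antidiag (\<alpha> + unit_exp b). fst q b \<noteq> 0}. of_nat (fst q b) * F q)"
    by (rule sum.reindex_bij_witness[where i = "\<lambda>q. (fst q - unit_exp b, snd q)"
          and j = "\<lambda>p. (fst p + unit_exp b, snd p)"])
       (auto simp: antidiag_def unit_exp_def fun_eq_iff)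
  also have "\<dots> = (\<Sum>q\<in>antidiag (\<alpha> + unit_exp b). of_nat (fst q b) * F q)"
    by (rule sum.mono_neutral_left) (auto simp: finite_antidiag)
  finally show ?thesis .
qed

lemma pdiff_cmul: "pdiff b (cmul f g) = cmul (pdiff b f) g + cmul f (pdiff b g)"
proof
  fix \<alpha> :: "'a::finite \<Rightarrow> nat"
  define M where "M = \<alpha> + unit_exp b"
  have left: "cmul (pdiff b u) v \<alpha> = (\<Sum>q\<in>antidiag M. of_nat (fst q b) * (u (fst q) * v (snd q)))"
    for u v :: "'a ser"
    unfolding cmul_antidiag pdiff_shift M_def sum_antidiag_shift[symmetric]
    by (simp add: mult.assoc)
  have right: "cmul f (pdiff b g) \<alpha> = (\<Sum>q\<in>antidiag M. of_nat (snd q b) * (f (fst q) * g (snd q)))"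
    unfolding cmul_comm[of f] left
    by (rule sum.reindex_bij_witness[where i = prod.swap and j = prod.swap])
       (auto simp: antidiag_def add.commute)
  have "pdiff b (cmul f g) \<alpha> = (\<Sum>q\<in>antidiag M. of_nat (M b) * (f (fst q) * g (snd q)))"
    by (simp add: pdiff_shift cmul_antidiag M_def sum_distrib_left unit_exp_def)
  also have "\<dots> = (\<Sum>q\<in>antidiag M. of_nat (fst q b) * (f (fst q) * g (snd q))
                                  + of_nat (snd q b) * (f (fst q) * g (snd q)))"
  proof (rule sum.cong)
    fix q assume "q \<in> antidiag M"
    hence "M b = fst q b + snd q b" by (auto simp: antidiag_def)
    thus "of_nat (M b) * (f (fst q) * g (snd q))
        = of_nat (fst q b) * (f (fst q) * g (snd q)) + of_nat (snd q b) * (f (fst q) * g (snd q))"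
      by (simp add: distrib_right)
  qed simp
  also have "\<dots> = (cmul (pdiff b f) g + cmul f (pdiff b g)) \<alpha>"
    by (simp add: left right sum.distrib)
  finally show "pdiff b (cmul f g) \<alpha> = (cmul (pdiff b f) g + cmul f (pdiff b g)) \<alpha>" .
qed

lemma mprod_derivation:
  assumes leibniz: "\<And>f g. D (cmul f g) = cmul (D f) g + cmul f (D g)" and "D sone = 0"
  shows "D (mprod k F) = (\<Sum>j<k. mprod k (F(j := D (F j))))"
proof (induction k)
  case 0 thus ?case using \<open>D sone = 0\<close> by simp
next
  case (Suc k)
  have "D (mprod (Suc k) F) = cmul (D (mprod k F)) (F k) + cmul (mprod k F) (D (F k))"
    by (simp add: leibniz)
  also have "cmul (D (mprod k F)) (F k) = (\<Sum>j<k. mprod (Suc k) (F(j := D (F j))))"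
    unfolding Suc cmul_sum_left by (rule sum.cong) auto
  also have "cmul (mprod k F) (D (F k)) = mprod (Suc k) (F(k := D (F k)))"
    using mprod_cong[of k "F(k := D (F k))" F] by simp
  finally show ?case by (simp only: sum.lessThan_Suc add.commute)
qed

lemma ham_cmul: "ham \<pi> h (cmul f g) = cmul (ham \<pi> h f) g + cmul f (ham \<pi> h g)"
proof -
  have "ham \<pi> h (cmul f g)
      = (\<Sum>a\<in>UNIV. \<Sum>b\<in>UNIV. cscale (\<pi> a b) (cmul (cmul (pdiff a h) (pdiff b f)) g)
                            + cscale (\<pi> a b) (cmul f (cmul (pdiff a h) (pdiff b g))))"
    unfolding ham_def
    by (intro sum.cong refl)
       (simp only: pdiff_cmul cmul_add_right cscale_add cmul_assoc cprod.left_commute[of "pdiff _ h" f])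
  also have "\<dots> = cmul (ham \<pi> h f) g + cmul f (ham \<pi> h g)"
    by (simp add: ham_def sum.distrib cmul_sum_left cmul_sum_right cmul_cscale_left cmul_cscale_right)
  finally show ?thesis .
qed

lemma ham_mprod: "ham \<pi> h (mprod k F) = (\<Sum>j<k. mprod k (F(j := ham \<pi> h (F j))))"
  by (rule mprod_derivation[where D = "ham \<pi> h"]) (simp add: ham_cmul, simp add: ham_def)

lemma pdiff_mprod: "pdiff b (mprod k F) = (\<Sum>j<k. mprod k (F(j := pdiff b (F j))))"
  by (rule mprod_derivation[where D = "pdiff b"]) (simp_all add: pdiff_cmul)

lemma ham_cscale: "ham \<pi> h (cscale c f) = cscale c (ham \<pi> h f)"
  by (simp add: ham_def pdiff_cscale cmul_cscale_right cscale_sum cscale_cscale mult.commute)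

lemma ham_sone [simp]: "ham \<pi> h sone = 0"
  by (simp add: ham_def)

lemma ham_at_zero: "(\<And>a. H (unit_exp a) = 0) \<Longrightarrow> ham \<pi> H f 0 = 0"
  by (simp add: ham_def sum_apply cscale_def cmul_at_zero pdiff_shift)

section \<open>Linear functions and antiderivatives\<close>

definition lin :: "('v \<Rightarrow> complex) \<Rightarrow> 'v ser" where
  "lin w = (\<lambda>\<alpha>. \<Sum>a\<in>UNIV. if \<alpha> = unit_exp a then w a else 0)"

definition antideriv :: "'v \<Rightarrow> 'v ser \<Rightarrow> 'v ser" where
  "antideriv c g = (\<lambda>\<alpha>. if \<alpha> c = 0 then 0 else g (\<alpha>(c := \<alpha> c - 1)) / of_nat (\<alpha> c))"

lemma add_unit_exp_eq_unit_exp: "\<alpha> + unit_exp a = unit_exp d \<longleftrightarrow> \<alpha> = 0 \<and> d = a"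
proof
  assume h: "\<alpha> + unit_exp a = unit_exp d"
  have "\<alpha> a + 1 = unit_exp d a" using fun_cong[OF h, of a] by (simp add: unit_exp_def)
  hence da: "d = a" and "\<alpha> a = 0" by (auto simp: unit_exp_def split: if_splits)
  moreover have "\<alpha> v = 0" if "v \<noteq> a" for v
    using fun_cong[OF h, of v] that da by (simp add: unit_exp_def)
  ultimately show "\<alpha> = 0 \<and> d = a" by (metis zero_fun_apply ext)
qed (auto simp: unit_exp_def)

lemma lin_at_zero [simp]: "lin w 0 = 0"
proof -
  have "(0::'a \<Rightarrow> nat) \<noteq> unit_exp a" for a by (auto simp: unit_exp_def fun_eq_iff)
  thus ?thesis by (simp add: lin_def)
qed

lemma pdiff_lin: "pdiff a (lin (w::'v::finite \<Rightarrow> complex)) = cscale (w a) sone"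
proof
  fix \<alpha> :: "'v \<Rightarrow> nat"
  have "pdiff a (lin w) \<alpha> = of_nat (\<alpha> a + 1) * (\<Sum>d\<in>UNIV. if \<alpha> = 0 \<and> d = a then w d else 0)"
    by (simp add: pdiff_shift lin_def add_unit_exp_eq_unit_exp)
  also have "\<dots> = cscale (w a) sone \<alpha>"
    by (cases "\<alpha> = 0") (auto simp: cscale_def sone_def zero_fun_def)
  finally show "pdiff a (lin w) \<alpha> = cscale (w a) sone \<alpha>" .
qed

lemma ham_lin_left:
  assumes "\<forall>a c. (\<Sum>b\<in>UNIV. \<omega> a b * \<pi> b c) = (if a = c then 1 else 0)"
  shows "ham \<pi> (lin (\<omega> b)) f = pdiff b f"
proof
  fix \<alpha>
  have "ham \<pi> (lin (\<omega> b)) f \<alpha> = (\<Sum>a\<in>UNIV. \<Sum>d\<in>UNIV. \<omega> b a * \<pi> a d * pdiff d f \<alpha>)"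
    unfolding ham_def sum_apply pdiff_lin cmul_cscale_left cmul_sone by (simp add: cscale_def mult_ac)
  also have "\<dots> = (\<Sum>d\<in>UNIV. (\<Sum>a\<in>UNIV. \<omega> b a * \<pi> a d) * pdiff d f \<alpha>)"
    by (subst sum.swap) (simp add: sum_distrib_right)
  also have "\<dots> = pdiff b f \<alpha>"
    by (simp add: assms[rule_format] if_distrib[of "\<lambda>x. x * _"] cong: if_cong)
  finally show "ham \<pi> (lin (\<omega> b)) f \<alpha> = pdiff b f \<alpha>" .
qed

lemma ham_lin_right:
  assumes "\<forall>a c. (\<Sum>b\<in>UNIV. \<pi> a b * \<omega> b c) = (if a = c then 1 else 0)"
  shows "ham \<pi> H (lin (\<lambda>b. \<omega> b c)) = pdiff c H"
proof
  fix \<alpha>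
  have "ham \<pi> H (lin (\<lambda>b. \<omega> b c)) \<alpha> = (\<Sum>a\<in>UNIV. \<Sum>d\<in>UNIV. \<pi> a d * (\<omega> d c * pdiff a H \<alpha>))"
    unfolding ham_def sum_apply pdiff_lin cmul_cscale_right cmul_comm[of _ sone] cmul_sone
    by (simp add: cscale_def)
  also have "\<dots> = (\<Sum>a\<in>UNIV. (\<Sum>d\<in>UNIV. \<pi> a d * \<omega> d c) * pdiff a H \<alpha>)"
    by (simp add: sum_distrib_right mult.assoc)
  also have "\<dots> = pdiff c H \<alpha>"
    by (simp add: assms[rule_format] if_distrib[of "\<lambda>x. x * _"] cong: if_cong)
  finally show "ham \<pi> H (lin (\<lambda>b. \<omega> b c)) \<alpha> = pdiff c H \<alpha>" .
qed

lemma pdiff_antideriv: "pdiff c (antideriv c g) = g"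
proof
  fix \<alpha> :: "'a \<Rightarrow> nat"
  have "(\<alpha> + unit_exp c)(c := \<alpha> c) = \<alpha>" by (auto simp: unit_exp_def fun_eq_iff)
  moreover have "(\<alpha> + unit_exp c) c = \<alpha> c + 1" by (simp add: unit_exp_def)
  ultimately show "pdiff c (antideriv c g) \<alpha> = g \<alpha>"
    unfolding pdiff_shift antideriv_def by (simp del: of_nat_Suc)
qed

lemma antideriv_unit_exp: "g 0 = 0 \<Longrightarrow> antideriv c g (unit_exp a) = 0"
proof -
  assume "g 0 = 0"
  moreover have "(unit_exp c)(c := 0) = 0" by (auto simp: unit_exp_def fun_eq_iff)
  ultimately show ?thesis by (auto simp: antideriv_def unit_exp_def)
qed

section \<open>Polynomials\<close>

lemma is_poly_add: "is_poly f \<Longrightarrow> is_poly g \<Longrightarrow> is_poly (f + g)"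
  unfolding is_poly_def
  by (rule finite_subset[of _ "{\<alpha>. f \<alpha> \<noteq> 0} \<union> {\<alpha>. g \<alpha> \<noteq> 0}"]) auto

lemma is_poly_sum: "(\<And>i. i \<in> I \<Longrightarrow> is_poly (G i)) \<Longrightarrow> is_poly (\<Sum>i\<in>I. G i)"
proof (induction I rule: infinite_finite_induct)
  case (insert i I) thus ?case by (metis insert_iff is_poly_add sum.insert)
qed (simp_all add: is_poly_def)

lemma is_poly_cscale: "is_poly f \<Longrightarrow> is_poly (cscale c f)"
  unfolding is_poly_def cscale_def by (rule finite_subset[of _ "{\<alpha>. f \<alpha> \<noteq> 0}"]) auto

lemma is_poly_sone: "is_poly sone"
  unfolding is_poly_def sone_def by (rule finite_subset[of _ "{0}"]) auto

lemma is_poly_lin: "is_poly (lin (w::'v::finite \<Rightarrow> complex))"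
proof -
  have "lin w \<alpha> = 0" if "\<alpha> \<notin> range unit_exp" for \<alpha>
    unfolding lin_def using that by (intro sum.neutral) auto
  hence "{\<alpha>. lin w \<alpha> \<noteq> 0} \<subseteq> range unit_exp" by blast
  thus ?thesis unfolding is_poly_def by (rule finite_subset) simp
qed

lemma is_poly_pdiff: "is_poly f \<Longrightarrow> is_poly (pdiff a f)"
proof -
  assume "is_poly f"
  hence "finite ((\<lambda>\<alpha>. \<alpha> + unit_exp a) -` {\<alpha>. f \<alpha> \<noteq> 0})"
    unfolding is_poly_def by (rule finite_vimageI) (auto simp: inj_def fun_eq_iff)
  moreover have "{\<alpha>. pdiff a f \<alpha> \<noteq> 0} \<subseteq> (\<lambda>\<alpha>. \<alpha> + unit_exp a) -` {\<alpha>. f \<alpha> \<noteq> 0}"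
    by (auto simp: pdiff_shift)
  ultimately show ?thesis unfolding is_poly_def by (rule finite_subset[rotated])
qed

lemma is_poly_antideriv: "is_poly g \<Longrightarrow> is_poly (antideriv c g)"
proof -
  assume g: "is_poly g"
  have "{\<alpha>. antideriv c g \<alpha> \<noteq> 0} \<subseteq> (\<lambda>\<alpha>. \<alpha> + unit_exp c) ` {\<alpha>. g \<alpha> \<noteq> 0}"
  proof
    fix \<alpha> assume "\<alpha> \<in> {\<alpha>. antideriv c g \<alpha> \<noteq> 0}"
    hence a: "\<alpha> c \<noteq> 0" "g (\<alpha>(c := \<alpha> c - 1)) \<noteq> 0"
      by (auto simp: antideriv_def split: if_splits)
    have "\<alpha> = \<alpha>(c := \<alpha> c - 1) + unit_exp c"
      using a(1) by (auto simp: fun_eq_iff unit_exp_def)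
    thus "\<alpha> \<in> (\<lambda>\<alpha>. \<alpha> + unit_exp c) ` {\<alpha>. g \<alpha> \<noteq> 0}" using a(2) by blast
  qed
  thus ?thesis using g unfolding is_poly_def by (meson finite_subset finite_imageI)
qed

lemma is_poly_cmul: "is_poly f \<Longrightarrow> is_poly g \<Longrightarrow> is_poly (cmul (f::'v::finite ser) g)"
proof -
  assume f: "is_poly f" and g: "is_poly g"
  have "{\<alpha>. cmul f g \<alpha> \<noteq> 0} \<subseteq> (\<lambda>p. fst p + snd p) ` ({\<alpha>. f \<alpha> \<noteq> 0} \<times> {\<alpha>. g \<alpha> \<noteq> 0})"
  proof
    fix \<alpha> assume "\<alpha> \<in> {\<alpha>. cmul f g \<alpha> \<noteq> 0}"
    then obtain p where "p \<in> antidiag \<alpha>" "f (fst p) * g (snd p) \<noteq> 0"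
      unfolding cmul_antidiag by (auto elim: sum.not_neutral_contains_not_neutral)
    thus "\<alpha> \<in> (\<lambda>p. fst p + snd p) ` ({\<alpha>. f \<alpha> \<noteq> 0} \<times> {\<alpha>. g \<alpha> \<noteq> 0})"
      by (intro image_eqI[of _ _ p]) (auto simp: antidiag_def mem_Times_iff)
  qed
  thus ?thesis using f g unfolding is_poly_def by (meson finite_subset finite_imageI finite_SigmaI)
qed

lemma is_poly_ham: "is_poly h \<Longrightarrow> is_poly f \<Longrightarrow> is_poly (ham \<pi> h (f::'v::finite ser))"
  unfolding ham_def by (intro is_poly_sum is_poly_cscale is_poly_cmul is_poly_pdiff)

locale coeff_space =
  fixes R :: "'v::finite ser set"
  assumes poly_or_formal: "R = {f. is_poly f} \<or> R = UNIV"
begin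

lemma add_mem: "f \<in> R \<Longrightarrow> g \<in> R \<Longrightarrow> f + g \<in> R"
  using poly_or_formal is_poly_add by auto

lemma cscale_mem: "f \<in> R \<Longrightarrow> cscale c f \<in> R"
  using poly_or_formal is_poly_cscale by auto

lemma sone_mem: "sone \<in> R"
  using poly_or_formal is_poly_sone by auto

lemma lin_mem: "lin w \<in> R"
  using poly_or_formal is_poly_lin by auto

lemma pdiff_mem: "f \<in> R \<Longrightarrow> pdiff a f \<in> R"
  using poly_or_formal is_poly_pdiff by auto

lemma antideriv_mem: "f \<in> R \<Longrightarrow> antideriv c f \<in> R"
  using poly_or_formal is_poly_antideriv by auto

lemma ham_mem: "h \<in> R \<Longrightarrow> f \<in> R \<Longrightarrow> ham \<pi> h f \<in> R"
  using poly_or_formal is_poly_ham by auto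

end

section \<open>Polydifferential operators are multilinear and local\<close>

lemma pdiffs_add: "pdiffs \<gamma> (f + g) = pdiffs \<gamma> f + pdiffs \<gamma> g"
  by (simp add: pdiffs_def fun_eq_iff distrib_left)

lemma pdiffs_cscale: "pdiffs \<gamma> (cscale a f) = cscale a (pdiffs \<gamma> f)"
  by (simp add: pdiffs_def cscale_def fun_eq_iff mult_ac)

lemma diffop_add: "diffop R D \<Longrightarrow> D (f + g) = D f + D g"
  unfolding diffop_def by (auto simp: pdiffs_add cmul_add_right sum.distrib)

lemma diffop_cscale: "diffop R D \<Longrightarrow> D (cscale a f) = cscale a (D f)"
  unfolding diffop_def by (auto simp: pdiffs_cscale cmul_cscale_right cscale_sum)

lemma polydiff_expansion_upd:
  assumes rep: "\<forall>fs. (\<forall>j<k. fs j \<in> R) \<longrightarrow> \<psi> fs = (\<Sum>i<N. mprod k (\<lambda>j. Ds i j (fs j)))"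
    and "\<forall>l<k. fs l \<in> R" "x \<in> R"
  shows "\<psi> (fs(j := x)) = (\<Sum>i<N. mprod k ((\<lambda>l. Ds i l (fs l))(j := Ds i j x)))"
proof -
  have "\<psi> (fs(j := x)) = (\<Sum>i<N. mprod k (\<lambda>l. Ds i l ((fs(j := x)) l)))"
    using assms by simp
  also have "\<dots> = (\<Sum>i<N. mprod k ((\<lambda>l. Ds i l (fs l))(j := Ds i j x)))"
    by (intro sum.cong refl arg_cong[where f = "mprod k"]) auto
  finally show ?thesis .
qed

context coeff_space
begin

lemma polydiff_add:
  assumes "polydiff R k \<psi>" "\<forall>l<k. fs l \<in> R" "j < k" "f \<in> R" "g \<in> R"
  shows "\<psi> (fs(j := f + g)) = \<psi> (fs(j := f)) + \<psi> (fs(j := g))"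
proof -
  obtain N :: nat and Ds where Ds: "\<forall>i j. diffop R (Ds i j)"
    and rep: "\<forall>fs. (\<forall>j<k. fs j \<in> R) \<longrightarrow> \<psi> fs = (\<Sum>i<N. mprod k (\<lambda>j. Ds i j (fs j)))"
    using assms(1) unfolding polydiff_def by (elim exE conjE) fast
  note upd = polydiff_expansion_upd[OF rep assms(2)]
  show ?thesis
    unfolding upd[OF add_mem[OF assms(4,5)]] upd[OF assms(4)] upd[OF assms(5)]
      diffop_add[OF Ds[rule_format]] mprod_upd_add[OF assms(3)] sum.distrib ..
qed

lemma polydiff_cscale:
  assumes "polydiff R k \<psi>" "\<forall>l<k. fs l \<in> R" "j < k" "f \<in> R"
  shows "\<psi> (fs(j := cscale a f)) = cscale a (\<psi> (fs(j := f)))"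
proof -
  obtain N :: nat and Ds where Ds: "\<forall>i j. diffop R (Ds i j)"
    and rep: "\<forall>fs. (\<forall>j<k. fs j \<in> R) \<longrightarrow> \<psi> fs = (\<Sum>i<N. mprod k (\<lambda>j. Ds i j (fs j)))"
    using assms(1) unfolding polydiff_def by (elim exE conjE) fast
  note upd = polydiff_expansion_upd[OF rep assms(2)]
  show ?thesis
    unfolding upd[OF cscale_mem[OF assms(4)]] upd[OF assms(4)]
      diffop_cscale[OF Ds[rule_format]] mprod_upd_cscale[OF assms(3)] cscale_sum ..
qed

lemma polydiff_local:
  assumes "polydiff R k \<psi>" "\<forall>l<k. fs l \<in> R" "\<forall>l<k. gs l = fs l"
  shows "\<psi> gs = \<psi> fs"
proof -
  obtain N :: nat and Ds where
    rep: "\<forall>fs. (\<forall>j<k. fs j \<in> R) \<longrightarrow> \<psi> fs = (\<Sum>i<N. mprod k (\<lambda>j. Ds i j (fs j)))"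
    using assms(1) unfolding polydiff_def by (elim exE conjE) fast
  have "\<forall>l<k. gs l \<in> R" using assms(2,3) by simp
  with assms(2,3) show ?thesis
    by (simp add: rep) (intro sum.cong refl mprod_cong, simp)
qed

end

section \<open>Invariance under translations\<close>

context coeff_space
begin

lemma ham_invariant_pdiff:
  assumes inverse: "\<forall>a c. (\<Sum>b\<in>UNIV. \<omega> a b * \<pi> b c) = (if a = c then 1 else 0)"
    and "ham_invariant \<pi> R k \<psi>" "\<forall>l<k. fs l \<in> R"
  shows "pdiff b (\<psi> fs) = (\<Sum>j<k. \<psi> (fs(j := pdiff b (fs j))))"
proof -
  have "ham \<pi> (lin (\<omega> b)) (\<psi> fs) = (\<Sum>j<k. \<psi> (fs(j := ham \<pi> (lin (\<omega> b)) (fs j))))"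
    using assms(2,3) lin_mem unfolding ham_invariant_def by blast
  thus ?thesis unfolding ham_lin_left[OF inverse] .
qed

lemma ham_invariant_eq_cscale_mprod:
  assumes inverse: "\<forall>a c. (\<Sum>b\<in>UNIV. \<omega> a b * \<pi> b c) = (if a = c then 1 else 0)"
    and invariant: "ham_invariant \<pi> R k \<psi>"
    and const: "\<And>fs. \<forall>l<k. fs l \<in> R \<Longrightarrow> \<psi> fs 0 = C * mprod k fs 0"
    and fs: "\<forall>l<k. fs l \<in> R"
  shows "\<psi> fs = cscale C (mprod k fs)"
proof
  fix \<alpha>
  show "\<psi> fs \<alpha> = cscale C (mprod k fs) \<alpha>"
    using fs
  proof (induction "sum \<alpha> UNIV" arbitrary: \<alpha> fs rule: less_induct)
    case less
    show ?case
    proof (cases "\<alpha> = 0")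
      case True
      with less.prems show ?thesis by (simp add: const cscale_def)
    next
      case False
      then obtain b where "\<alpha> b \<noteq> 0" by (auto simp: fun_eq_iff)
      define \<beta> where "\<beta> = \<alpha>(b := \<alpha> b - 1)"
      have \<alpha>: "\<alpha> = \<beta> + unit_exp b"
        using \<open>\<alpha> b \<noteq> 0\<close> by (auto simp: \<beta>_def unit_exp_def fun_eq_iff)
      have "sum \<beta> UNIV < sum \<alpha> UNIV" by (simp add: \<alpha> sum.distrib unit_exp_def)
      note IH = less.hyps[OF this]
      have "of_nat (\<beta> b + 1) * \<psi> fs \<alpha> = pdiff b (\<psi> fs) \<beta>"
        by (simp add: pdiff_shift \<alpha>)
      also have "\<dots> = (\<Sum>j<k. \<psi> (fs(j := pdiff b (fs j))) \<beta>)"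
        by (simp add: ham_invariant_pdiff[OF inverse invariant less.prems] sum_apply)
      also have "\<dots> = (\<Sum>j<k. cscale C (mprod k (fs(j := pdiff b (fs j)))) \<beta>)"
        using less.prems by (intro sum.cong refl IH) (simp add: pdiff_mem)
      also have "\<dots> = cscale C (pdiff b (mprod k fs)) \<beta>"
        by (simp add: pdiff_mprod cscale_sum sum_apply)
      also have "\<dots> = of_nat (\<beta> b + 1) * cscale C (mprod k fs) \<alpha>"
        by (simp add: pdiff_shift \<alpha> cscale_def)
      finally show ?thesis by (simp del: of_nat_Suc)
    qed
  qed
qed

end

section \<open>The constant term of an invariant operator\<close>

locale invariant_polyop = coeff_space R
  for R :: "'v::finite ser set" +
  fixes k :: nat and \<pi> \<omega> :: "'v \<Rightarrow> 'v \<Rightarrow> complex" and \<psi> :: "(nat \<Rightarrow> 'v ser) \<Rightarrow> 'v ser"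
  assumes inverse: "\<forall>a c. (\<Sum>b\<in>UNIV. \<pi> a b * \<omega> b c) = (if a = c then 1 else 0)"
    and symmetric: "symmetric_op R k \<psi>"
    and invariant: "ham_invariant \<pi> R k \<psi>"
    and add: "\<forall>l<k. fs l \<in> R \<Longrightarrow> j < k \<Longrightarrow> f \<in> R \<Longrightarrow> g \<in> R \<Longrightarrow>
                \<psi> (fs(j := f + g)) = \<psi> (fs(j := f)) + \<psi> (fs(j := g))"
    and scale: "\<forall>l<k. fs l \<in> R \<Longrightarrow> j < k \<Longrightarrow> f \<in> R \<Longrightarrow>
                \<psi> (fs(j := cscale a f)) = cscale a (\<psi> (fs(j := f)))"
    and local: "\<forall>l<k. fs l \<in> R \<Longrightarrow> \<forall>l<k. gs l = fs l \<Longrightarrow> \<psi> gs = \<psi> fs"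
begin

lemma zero_arg: "\<forall>l<k. fs l \<in> R \<Longrightarrow> j < k \<Longrightarrow> \<psi> (fs(j := 0)) = 0"
  using scale[of fs j sone 0] sone_mem by (simp add: cscale_def zero_fun_def)

lemma swap_args: "\<forall>l<k. fs l \<in> R \<Longrightarrow> i < k \<Longrightarrow> j < k \<Longrightarrow> \<psi> (fs \<circ> transpose i j) = \<psi> fs"
  using symmetric unfolding symmetric_op_def by simp

lemma const_term_transport:
  assumes fs: "\<forall>l<k. fs l \<in> R" and i: "i < k" "fs i 0 = 0"
    and others: "\<And>j. j < k \<Longrightarrow> j \<noteq> i \<Longrightarrow> fs j \<noteq> lin (\<lambda>b. \<omega> b c) \<Longrightarrow> fs j \<noteq> sone \<Longrightarrow>
        \<psi> (fs(i := lin (\<lambda>b. \<omega> b c), j := ham \<pi> (antideriv c (fs i)) (fs j))) 0 = 0"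
  shows "\<psi> fs 0 = 0"
proof -
  define z where "z = lin (\<lambda>b. \<omega> b c)"
  define H where "H = antideriv c (fs i)"
  define gs where "gs = fs(i := z)"
  have H: "H \<in> R" "\<And>a. H (unit_exp a) = 0"
    using fs i by (auto simp: H_def antideriv_mem antideriv_unit_exp)
  have gs: "\<forall>l<k. gs l \<in> R" using fs by (simp add: gs_def z_def lin_mem)
  have Hz: "ham \<pi> H z = fs i"
    by (simp add: z_def H_def ham_lin_right[OF inverse] pdiff_antideriv)
  have "z \<noteq> sone" unfolding z_def by (metis lin_at_zero sone_at_zero zero_neq_one)
  have summand: "\<psi> (gs(j := ham \<pi> H (gs j))) 0 = (if gs j = z then \<psi> fs 0 else 0)"
    if j: "j < k" for j
  proof (cases "j = i")
    case True
    with \<open>z \<noteq> sone\<close> show ?thesis by (simp add: gs_def Hz)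
  next
    case False
    consider "fs j = z" | "fs j = sone" | "fs j \<noteq> z" "fs j \<noteq> sone" by blast
    thus ?thesis
    proof cases
      case 1
      with False have "gs(j := ham \<pi> H (gs j)) = fs \<circ> transpose i j"
        by (intro ext) (simp add: gs_def Hz transpose_def)
      with 1 False show ?thesis using swap_args[OF fs i(1) j] by (simp add: gs_def)
    next
      case 2
      with False have "gs j = sone" by (simp add: gs_def)
      with \<open>z \<noteq> sone\<close> show ?thesis using zero_arg[OF gs j] by simp
    next
      case 3
      with False j show ?thesis using others by (simp add: gs_def z_def H_def)
    qed
  qed
  have "0 = ham \<pi> H (\<psi> gs) 0" using H(2) by (rule ham_at_zero[symmetric])
  also have "\<dots> = (\<Sum>j<k. \<psi> (gs(j := ham \<pi> H (gs j))) 0)"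
    using invariant H(1) gs unfolding ham_invariant_def by (simp add: sum_apply)
  also have "\<dots> = (\<Sum>j<k. if gs j = z then \<psi> fs 0 else 0)"
    by (intro sum.cong refl summand) simp
  also have "\<dots> = of_nat (card {j\<in>{..<k}. gs j = z}) * \<psi> fs 0"
    by (simp add: sum.inter_filter[symmetric])
  finally have "of_nat (card {j\<in>{..<k}. gs j = z}) * \<psi> fs 0 = 0" by simp
  moreover have "card {j\<in>{..<k}. gs j = z} \<noteq> 0"
    using i by (auto simp: gs_def card_eq_0_iff)
  ultimately show ?thesis by auto
qed

lemma const_term_vanishes:
  assumes "\<forall>l<k. fs l \<in> R" "\<forall>l<k. fs l = sone \<or> fs l 0 = 0" "i < k" "fs i 0 = 0"
  shows "\<psi> fs 0 = 0"
proof -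
  fix c :: 'v
  show ?thesis
    using assms
  proof (induction "card {j. j < k \<and> fs j \<noteq> lin (\<lambda>b. \<omega> b c)}" arbitrary: fs i rule: less_induct)
    case less
    let ?z = "lin (\<lambda>b. \<omega> b c)"
    \<comment> \<open>Prefer a vanishing argument other than \<open>z\<close>; if there is none, no summand
      of the transport identity is left to control.\<close>
    obtain i' where i': "i' < k" "fs i' 0 = 0"
      and choice: "fs i' \<noteq> ?z \<or> (\<forall>j<k. fs j 0 = 0 \<longrightarrow> fs j = ?z)"
      using less.prems(3,4) by blast
    show ?case
    proof (rule const_term_transport[OF less.prems(1) i'])
      fix j assume j: "j < k" "j \<noteq> i'" "fs j \<noteq> ?z" "fs j \<noteq> sone"
      with less.prems(2) have "fs j 0 = 0" by blast
      with choice j have "fs i' \<noteq> ?z" by blast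
      define ts where "ts = fs(i' := ?z, j := ham \<pi> (antideriv c (fs i')) (fs j))"
      have "{l. l < k \<and> ts l \<noteq> ?z} \<subset> {l. l < k \<and> fs l \<noteq> ?z}"
        using i' j \<open>fs i' \<noteq> ?z\<close> by (auto simp: ts_def)
      hence "card {l. l < k \<and> ts l \<noteq> ?z} < card {l. l < k \<and> fs l \<noteq> ?z}"
        by (rule psubset_card_mono[rotated]) simp
      moreover have "\<forall>l<k. ts l \<in> R"
        using less.prems(1) i' j by (simp add: ts_def lin_mem ham_mem antideriv_mem)
      moreover have "\<forall>l<k. ts l = sone \<or> ts l 0 = 0"
        using less.prems(2) i' j
        by (simp add: ts_def ham_at_zero antideriv_unit_exp)
      moreover have "ts j 0 = 0"
        using i' by (simp add: ts_def ham_at_zero antideriv_unit_exp)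
      ultimately show "\<psi> ts 0 = 0"
        using less.hyps j(1) by blast
    qed
  qed
qed

lemma const_term_split:
  assumes "\<forall>l<k. fs l \<in> R" "j < k"
  shows "\<psi> fs 0 = fs j 0 * \<psi> (fs(j := sone)) 0 + \<psi> (fs(j := fs j + cscale (- fs j 0) sone)) 0"
proof -
  let ?g = "fs j + cscale (- fs j 0) sone"
  have "?g \<in> R" using assms by (simp add: add_mem cscale_mem sone_mem)
  have "\<psi> fs = \<psi> (fs(j := cscale (fs j 0) sone + ?g))"
    by (rule arg_cong[where f = \<psi>]) (auto simp: cscale_def fun_eq_iff)
  also have "\<dots> = cscale (fs j 0) (\<psi> (fs(j := sone))) + \<psi> (fs(j := ?g))"
    using assms \<open>?g \<in> R\<close> sone_mem by (simp add: add cscale_mem scale)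
  finally show ?thesis by (simp add: cscale_def)
qed

lemma const_term_factorizes:
  "\<forall>l<k. fs l \<in> R \<Longrightarrow> \<psi> fs 0 = \<psi> (\<lambda>_. sone) 0 * mprod k fs 0"
proof (induction "card {j. j < k \<and> fs j \<noteq> sone \<and> fs j 0 \<noteq> 0}" arbitrary: fs rule: less_induct)
  case less
  show ?case
  proof (cases "\<exists>j<k. fs j \<noteq> sone \<and> fs j 0 \<noteq> 0")
    case False
    show ?thesis
    proof (cases "\<exists>i<k. fs i 0 = 0")
      case True
      with False less.prems have "\<psi> fs 0 = 0" by (metis const_term_vanishes)
      with True show ?thesis by (auto simp: mprod_at_zero)
    next
      case False
      with \<open>\<not> (\<exists>j<k. fs j \<noteq> sone \<and> fs j 0 \<noteq> 0)\<close> have "\<forall>l<k. fs l = sone" by blast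
      with less.prems show ?thesis
        using local[of "\<lambda>_. sone" fs] sone_mem by (simp add: mprod_at_zero)
    qed
  next
    case True
    then obtain j where j: "j < k" "fs j \<noteq> sone" "fs j 0 \<noteq> 0" by blast
    define g where "g = fs j + cscale (- fs j 0) sone"
    define rest where "rest = cprod.F fs ({..<k} - {j}) 0"
    have g: "g \<in> R" "g 0 = 0"
      using less.prems j(1) unfolding g_def
      by (simp add: add_mem cscale_mem sone_mem) (simp add: cscale_def)
    have mprod_upd_at_zero: "mprod k (fs(j := x)) 0 = x 0 * rest" for x
      by (simp add: mprod_upd[OF j(1)] cmul_at_zero rest_def)
    have IH: "\<psi> (fs(j := x)) 0 = \<psi> (\<lambda>_. sone) 0 * mprod k (fs(j := x)) 0"
      if "x \<in> R" "x = sone \<or> x 0 = 0" for x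
    proof (rule less.hyps)
      show "card {l. l < k \<and> (fs(j := x)) l \<noteq> sone \<and> (fs(j := x)) l 0 \<noteq> 0}
          < card {l. l < k \<and> fs l \<noteq> sone \<and> fs l 0 \<noteq> 0}"
        using that j by (intro psubset_card_mono) auto
      show "\<forall>l<k. (fs(j := x)) l \<in> R" using less.prems that(1) by simp
    qed
    have "\<psi> fs 0 = fs j 0 * \<psi> (fs(j := sone)) 0 + \<psi> (fs(j := g)) 0"
      unfolding g_def using less.prems j(1) by (rule const_term_split)
    also have "\<dots> = \<psi> (\<lambda>_. sone) 0 * (fs j 0 * rest)"
      using IH[of sone] IH[of g] sone_mem g by (simp add: mprod_upd_at_zero)
    also have "fs j 0 * rest = mprod k fs 0"
      using mprod_upd_at_zero[of "fs j"] by simp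
    finally show ?thesis .
  qed
qed

end

lemma (in coeff_space) invariant_polyop_if_polydiff:
  assumes "\<forall>a c. (\<Sum>b\<in>UNIV. \<pi> a b * \<omega> b c) = (if a = c then 1 else 0)"
    and "polydiff R k \<psi>" "symmetric_op R k \<psi>" "ham_invariant \<pi> R k \<psi>"
  shows "invariant_polyop R k \<pi> \<omega> \<psi>"
proof unfold_locales
  fix fs gs :: "nat \<Rightarrow> 'v ser" and j f g a
  assume fs: "\<forall>l<k. fs l \<in> R"
  show "j < k \<Longrightarrow> f \<in> R \<Longrightarrow> g \<in> R \<Longrightarrow> \<psi> (fs(j := f + g)) = \<psi> (fs(j := f)) + \<psi> (fs(j := g))"
    by (rule polydiff_add[OF assms(2) fs])
  show "j < k \<Longrightarrow> f \<in> R \<Longrightarrow> \<psi> (fs(j := cscale a f)) = cscale a (\<psi> (fs(j := f)))"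
    by (rule polydiff_cscale[OF assms(2) fs])
  show "\<forall>l<k. gs l = fs l \<Longrightarrow> \<psi> gs = \<psi> fs"
    by (rule polydiff_local[OF assms(2) fs])
qed (use assms in auto)

section \<open>Multiples of the product\<close>

lemma symmetric_op_cscale_mprod:
  assumes "\<And>fs. \<forall>j<k. fs j \<in> R \<Longrightarrow> \<psi> fs = cscale c (mprod k fs)"
  shows "symmetric_op R k \<psi>"
  unfolding symmetric_op_def
proof (intro allI impI)
  fix \<sigma> fs assume \<sigma>: "bij_betw \<sigma> {..<k} {..<k}" and fs: "\<forall>j<k. fs j \<in> R"
  hence "\<forall>j<k. (fs \<circ> \<sigma>) j \<in> R" by (auto simp: bij_betw_def)
  with \<sigma> fs show "\<psi> (fs \<circ> \<sigma>) = \<psi> fs" by (simp add: assms mprod_permute)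
qed

lemma (in coeff_space) ham_invariant_cscale_mprod:
  assumes "\<And>fs. \<forall>j<k. fs j \<in> R \<Longrightarrow> \<psi> fs = cscale c (mprod k fs)"
  shows "ham_invariant \<pi> R k \<psi>"
  unfolding ham_invariant_def
proof (intro allI impI)
  fix h fs assume h: "h \<in> R" and fs: "\<forall>j<k. fs j \<in> R"
  have "ham \<pi> h (\<psi> fs) = (\<Sum>j<k. cscale c (mprod k (fs(j := ham \<pi> h (fs j)))))"
    using fs by (simp add: assms ham_cscale ham_mprod cscale_sum)
  also have "\<dots> = (\<Sum>j<k. \<psi> (fs(j := ham \<pi> h (fs j))))"
    using fs h by (intro sum.cong refl) (simp add: assms ham_mem)
  finally show "ham \<pi> h (\<psi> fs) = (\<Sum>j<k. \<psi> (fs(j := ham \<pi> h (fs j))))" .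
qed

theorem mainTheorem11:
  fixes \<omega> \<pi> :: "'v::finite \<Rightarrow> 'v \<Rightarrow> complex" and n :: nat and R :: "'v ser set"
  assumes skew: "\<forall>a b. \<omega> a b = - \<omega> b a"
    and inv1: "\<forall>a c. (\<Sum>b\<in>UNIV. \<omega> a b * \<pi> b c) = (if a = c then 1 else 0)"
    and inv2: "\<forall>a c. (\<Sum>b\<in>UNIV. \<pi> a b * \<omega> b c) = (if a = c then 1 else 0)"
    and n: "n \<ge> 2"
    and R: "R = {f. is_poly f} \<or> R = UNIV"
    and pd: "polydiff R (n - 1) \<psi>"
  shows "(symmetric_op R (n - 1) \<psi> \<and> ham_invariant \<pi> R (n - 1) \<psi>) \<longleftrightarrow>
         (\<exists>c. \<forall>fs. (\<forall>j<n - 1. fs j \<in> R) \<longrightarrow> \<psi> fs = cscale c (mprod (n - 1) fs))"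
proof -
  interpret coeff_space R using R by unfold_locales
  define k where "k = n - 1"
  have "\<psi> fs = cscale (\<psi> (\<lambda>_. sone) 0) (mprod k fs)"
    if "symmetric_op R k \<psi>" "ham_invariant \<pi> R k \<psi>" "\<forall>j<k. fs j \<in> R" for fs
  proof -
    interpret invariant_polyop R k \<pi> \<omega> \<psi>
      using invariant_polyop_if_polydiff inv2 pd that(1,2) by (simp add: k_def)
    show ?thesis
      using ham_invariant_eq_cscale_mprod[OF inv1 invariant const_term_factorizes that(3)] .
  qed
  moreover have "symmetric_op R k \<psi> \<and> ham_invariant \<pi> R k \<psi>"
    if "\<forall>fs. (\<forall>j<k. fs j \<in> R) \<longrightarrow> \<psi> fs = cscale c (mprod k fs)" for c
    using that symmetric_op_cscale_mprod ham_invariant_cscale_mprod by blast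
  ultimately show ?thesis
    unfolding k_def[symmetric] by blast
qed

end
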